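(* Let $k \geq 1$ be an integer and suppose $t \in [0, 1]$ satisfies $$\frac{k}{k+1} \left((t^k - t + 1)^{\frac{k+1}{k}} - t^{k + 1}\right) \geq \frac{1 - t^2}{2}.$$ Then in any election there exists a committee of $k$ candidates that is $(t^k - t + 1)$-undominated.
   Context: An election consists of a finite set $V$ of $n$ voters, a finite set $C$ of candidates, and for each voter $v$ a strict linear order $\succ_v$ on $C$. A committee is a subset $S \subseteq C$. For a candidate $a$ and committee $S$, write $a \succ_v S$ if $v$ prefers $a$ to every member of $S$, and let $\frac1n|a \succ S| = \frac1n|\{v \in V : a \succ_v S\}|$. A committee $S$ is $\alpha$-undominated if for every candidate $a \in C$, $\frac1n|a \succ S| < \alpha$. *)

theory Defs
  imports Complex_Main
begin

text \<open>A strict linear order on the candidate set C, given as a binary predicate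
  (R a b means a is ranked strictly above b).\<close>
definition strict_linear_order_on :: "'c set \<Rightarrow> ('c \<Rightarrow> 'c \<Rightarrow> bool) \<Rightarrow> bool" where
  "strict_linear_order_on C R \<longleftrightarrow>
     (\<forall>a\<in>C. \<not> R a a) \<and>
     (\<forall>a\<in>C. \<forall>b\<in>C. \<forall>c\<in>C. R a b \<longrightarrow> R b c \<longrightarrow> R a c) \<and>
     (\<forall>a\<in>C. \<forall>b\<in>C. a \<noteq> b \<longrightarrow> R a b \<or> R b a)"

definition election :: "'v set \<Rightarrow> 'c set \<Rightarrow> ('v \<Rightarrow> 'c \<Rightarrow> 'c \<Rightarrow> bool) \<Rightarrow> bool" where
  "election V C P \<longleftrightarrow> finite V \<and> V \<noteq> {} \<and> finite C \<and>
     (\<forall>v\<in>V. strict_linear_order_on C (P v))"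

definition prefers_to_committee :: "('v \<Rightarrow> 'c \<Rightarrow> 'c \<Rightarrow> bool) \<Rightarrow> 'v \<Rightarrow> 'c \<Rightarrow> 'c set \<Rightarrow> bool" where
  "prefers_to_committee P v a S \<longleftrightarrow> (\<forall>s\<in>S. P v a s)"

definition dom_fraction :: "'v set \<Rightarrow> ('v \<Rightarrow> 'c \<Rightarrow> 'c \<Rightarrow> bool) \<Rightarrow> 'c \<Rightarrow> 'c set \<Rightarrow> real" where
  "dom_fraction V P a S = real (card {v\<in>V. prefers_to_committee P v a S}) / real (card V)"

definition undominated :: "'v set \<Rightarrow> 'c set \<Rightarrow> ('v \<Rightarrow> 'c \<Rightarrow> 'c \<Rightarrow> bool) \<Rightarrow> real \<Rightarrow> 'c set \<Rightarrow> bool" where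
  "undominated V C P \<alpha> S \<longleftrightarrow> (\<forall>a\<in>C. dom_fraction V P a S < \<alpha>)"

end

theory Submission
  imports Defs "HOL-Library.FuncSet"
begin

(* Draw the k committee members independently from a distribution p on the candidates.
   LP duality yields a p for which, for every candidate a, the excesses max 0 (m_v(a) - t),
   where m_v(a) is the p-mass that voter v ranks below a, sum to at most n (1 - t)^2 / 2:
   against a mixed strategy q of an adversary choosing a, the answer p = q works, since for a
   single voter the q-average excess is a Riemann sum of the integral of max 0 (s - t) over [0, 1].
   Let theta^k = t^k - t + 1. If y is the p-mass weakly below a voter's favourite sampled member,
   the expected deficit max 0 (theta - max y t) is less than its value for a continuous
   distribution. A voter preferring a to the committee has y <= m_v(a), so theta - t is at most
   their excess plus their deficit; for a sample with below-average total deficit, summing over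
   these voters bounds their number, and the hypothesis on t makes the bound (t^k - t + 1) n. *)

text \<open>A row e encodes the inequality (\<Sum>j\<in>X. fst e j * x j) \<le> snd e.\<close>

definition row_comb ::
    "real \<Rightarrow> ('x \<Rightarrow> real) \<times> real \<Rightarrow> real \<Rightarrow> ('x \<Rightarrow> real) \<times> real \<Rightarrow> ('x \<Rightarrow> real) \<times> real" where
  "row_comb a e1 b e2 = (\<lambda>j. a * fst e1 j + b * fst e2 j, a * snd e1 + b * snd e2)"

lemma row_comb_lhs:
  "(\<Sum>j\<in>X. fst (row_comb a e1 b e2) j * x j) = a * (\<Sum>j\<in>X. fst e1 j * x j) + b * (\<Sum>j\<in>X. fst e2 j * x j)"
  by (simp add: row_comb_def distrib_right sum.distrib mult.assoc flip: sum_distrib_left)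

lemma snd_row_comb: "snd (row_comb a e1 b e2) = a * snd e1 + b * snd e2"
  by (simp add: row_comb_def)

definition fourier_motzkin :: "'x \<Rightarrow> (('x \<Rightarrow> real) \<times> real) set \<Rightarrow> (('x \<Rightarrow> real) \<times> real) set" where
  "fourier_motzkin z S = {e\<in>S. fst e z = 0} \<union>
     (\<lambda>(e1, e2). row_comb (- fst e2 z) e1 (fst e1 z) e2) ` ({e\<in>S. 0 < fst e z} \<times> {e\<in>S. fst e z < 0})"

lemma finite_fourier_motzkin: "finite S \<Longrightarrow> finite (fourier_motzkin z S)"
  by (simp add: fourier_motzkin_def)

lemma fourier_motzkin_coeff_eq_0: "e \<in> fourier_motzkin z S \<Longrightarrow> fst e z = 0"
  by (auto simp: fourier_motzkin_def row_comb_def)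

lemma fourier_motzkin_nonneg_combination:
  assumes "finite S" "e \<in> fourier_motzkin z S"
  shows "\<exists>L. (\<forall>c\<in>S. 0 \<le> L c) \<and> (\<forall>j. (\<Sum>c\<in>S. L c * fst c j) = fst e j) \<and>
             (\<Sum>c\<in>S. L c * snd c) = snd e"
  using assms(2) unfolding fourier_motzkin_def
proof (elim UnE imageE)
  assume "e \<in> {e \<in> S. fst e z = 0}"
  then show ?thesis
    using assms(1) by (intro exI[of _ "\<lambda>c. of_bool (c = e)"]) auto
next
  fix ee assume "ee \<in> {e \<in> S. 0 < fst e z} \<times> {e \<in> S. fst e z < 0}"
    and "e = (\<lambda>(e1, e2). row_comb (- fst e2 z) e1 (fst e1 z) e2) ee"
  then obtain e1 e2 where e12: "e1 \<in> S" "e2 \<in> S" "0 < fst e1 z" "fst e2 z < 0"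
    and e: "e = row_comb (- fst e2 z) e1 (fst e1 z) e2"
    by auto
  define a b where "a = - fst e2 z" and "b = fst e1 z"
  define L where "L c = a * of_bool (c = e1) + b * of_bool (c = e2)" for c
  have "(\<Sum>c\<in>S. L c * g c) = a * g e1 + b * g e2" for g :: "_ \<Rightarrow> real"
    using assms(1) e12 by (simp add: L_def distrib_right sum.distrib mult.assoc flip: sum_distrib_left)
  moreover have "\<forall>c\<in>S. 0 \<le> L c"
    using e12 by (auto simp: L_def a_def b_def)
  ultimately show ?thesis
    by (intro exI[of _ L]) (simp add: e row_comb_def flip: a_def b_def)
qed

lemma finite_sets_separated:
  fixes L U :: "real set"
  assumes "finite L" "finite U" "\<And>l u. l \<in> L \<Longrightarrow> u \<in> U \<Longrightarrow> l \<le> u"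
  obtains v where "\<And>l. l \<in> L \<Longrightarrow> l \<le> v" "\<And>u. u \<in> U \<Longrightarrow> v \<le> u"
proof (cases "L = {}")
  case True
  show ?thesis
    by (rule that[of "if U = {} then 0 else Min U"]) (use True assms(2) in auto)
next
  case False
  show ?thesis
    by (rule that[of "Max L"]) (use False assms in auto)
qed

lemma fourier_motzkin_lift_solution:
  assumes "finite X" "z \<notin> X" "finite S"
    and x: "\<forall>e\<in>fourier_motzkin z S. (\<Sum>j\<in>X. fst e j * x j) \<le> snd e"
  shows "\<exists>x'. \<forall>e\<in>S. (\<Sum>j\<in>insert z X. fst e j * x' j) \<le> snd e"
proof -
  define r where "r e = snd e - (\<Sum>j\<in>X. fst e j * x j)" for e
  define Pos where "Pos = {e\<in>S. 0 < fst e z}"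
  define Neg where "Neg = {e\<in>S. fst e z < 0}"
  have compatible: "r e2 / fst e2 z \<le> r e1 / fst e1 z" if "e1 \<in> Pos" "e2 \<in> Neg" for e1 e2
  proof -
    have "row_comb (- fst e2 z) e1 (fst e1 z) e2 \<in> fourier_motzkin z S"
      using that by (auto simp: fourier_motzkin_def Pos_def Neg_def)
    with x have "(\<Sum>j\<in>X. fst (row_comb (- fst e2 z) e1 (fst e1 z) e2) j * x j)
        \<le> snd (row_comb (- fst e2 z) e1 (fst e1 z) e2)"
      by blast
    then have "0 \<le> - fst e2 z * r e1 + fst e1 z * r e2"
      unfolding row_comb_lhs snd_row_comb by (simp add: r_def algebra_simps)
    moreover have "0 < fst e1 z" "fst e2 z < 0"
      using that by (auto simp: Pos_def Neg_def)
    ultimately show ?thesis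
      by (simp add: neg_divide_le_eq le_divide_eq algebra_simps)
  qed
  obtain v where "\<And>l. l \<in> (\<lambda>e. r e / fst e z) ` Neg \<Longrightarrow> l \<le> v"
    "\<And>u. u \<in> (\<lambda>e. r e / fst e z) ` Pos \<Longrightarrow> v \<le> u"
    by (rule finite_sets_separated[of "(\<lambda>e. r e / fst e z) ` Neg" "(\<lambda>e. r e / fst e z) ` Pos"])
      (use assms(3) compatible in \<open>auto simp: Pos_def Neg_def\<close>)
  then have v_ge: "\<And>e. e \<in> Neg \<Longrightarrow> r e / fst e z \<le> v" and v_le: "\<And>e. e \<in> Pos \<Longrightarrow> v \<le> r e / fst e z"
    by auto
  have "(\<Sum>j\<in>insert z X. fst e j * (x(z := v)) j) \<le> snd e" if e: "e \<in> S" for e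
  proof -
    have "fst e z * v \<le> r e"
    proof (cases "fst e z" "0 :: real" rule: linorder_cases)
      case less
      then show ?thesis using v_ge[of e] e by (simp add: Neg_def neg_divide_le_eq mult.commute)
    next
      case equal
      then have "e \<in> fourier_motzkin z S" using e by (simp add: fourier_motzkin_def)
      then show ?thesis using x equal by (simp add: r_def)
    next
      case greater
      then show ?thesis using v_le[of e] e by (simp add: Pos_def le_divide_eq mult.commute)
    qed
    moreover have "(\<Sum>j\<in>X. fst e j * (x(z := v)) j) = (\<Sum>j\<in>X. fst e j * x j)"
      using assms(2) by (intro sum.cong) auto
    ultimately show ?thesis
      using assms(1,2) by (simp add: r_def)
  qed
  then show ?thesis by blast
qed

lemma fourier_motzkin_lift_certificate:
  assumes "finite S"
    and l: "\<forall>e\<in>fourier_motzkin z S. 0 \<le> l e"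
      "\<forall>j\<in>X. (\<Sum>e\<in>fourier_motzkin z S. l e * fst e j) = 0"
      "(\<Sum>e\<in>fourier_motzkin z S. l e * snd e) < 0"
  shows "\<exists>l'. (\<forall>e\<in>S. 0 \<le> l' e) \<and> (\<forall>j\<in>insert z X. (\<Sum>e\<in>S. l' e * fst e j) = 0) \<and>
              (\<Sum>e\<in>S. l' e * snd e) < 0"
proof -
  define S' where "S' = fourier_motzkin z S"
  have "\<forall>e\<in>S'. \<exists>L. (\<forall>c\<in>S. 0 \<le> L c) \<and> (\<forall>j. (\<Sum>c\<in>S. L c * fst c j) = fst e j) \<and>
      (\<Sum>c\<in>S. L c * snd c) = snd e"
    using fourier_motzkin_nonneg_combination[OF assms(1)] by (simp add: S'_def)
  then obtain L where "\<forall>e\<in>S'. (\<forall>c\<in>S. 0 \<le> L e c) \<and> (\<forall>j. (\<Sum>c\<in>S. L e c * fst c j) = fst e j) \<and>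
      (\<Sum>c\<in>S. L e c * snd c) = snd e"
    by (rule bchoice[elim_format]) blast
  then have L: "\<And>e c. e \<in> S' \<Longrightarrow> c \<in> S \<Longrightarrow> 0 \<le> L e c"
    "\<And>e j. e \<in> S' \<Longrightarrow> (\<Sum>c\<in>S. L e c * fst c j) = fst e j"
    "\<And>e. e \<in> S' \<Longrightarrow> (\<Sum>c\<in>S. L e c * snd c) = snd e"
    by blast+
  define l' where "l' c = (\<Sum>e\<in>S'. l e * L e c)" for c
  have l'_sum: "(\<Sum>c\<in>S. l' c * g c) = (\<Sum>e\<in>S'. l e * (\<Sum>c\<in>S. L e c * g c))" for g :: "_ \<Rightarrow> real"
    unfolding l'_def sum_distrib_right sum_distrib_left by (subst sum.swap) (simp add: mult.assoc)
  have "\<forall>c\<in>S. 0 \<le> l' c"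
    using l(1) L(1) by (auto simp: l'_def S'_def intro!: sum_nonneg)
  moreover have "(\<Sum>c\<in>S. l' c * fst c j) = 0" if "j \<in> insert z X" for j
  proof -
    have "(\<Sum>c\<in>S. l' c * fst c j) = (\<Sum>e\<in>S'. l e * fst e j)"
      unfolding l'_sum by (intro sum.cong) (auto simp: L)
    also have "\<dots> = 0"
    proof (cases "j = z")
      case True
      then show ?thesis by (simp add: S'_def fourier_motzkin_coeff_eq_0)
    next
      case False
      then show ?thesis using that l(2) by (simp add: S'_def)
    qed
    finally show ?thesis .
  qed
  moreover have "(\<Sum>c\<in>S. l' c * snd c) < 0"
    using l(3) unfolding l'_sum S'_def[symmetric] by (simp add: L(3))
  ultimately show ?thesis by blast
qed

lemma farkas_rows:
  fixes X :: "'x set" and S :: "(('x \<Rightarrow> real) \<times> real) set"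
  assumes "finite X" "finite S"
  shows "(\<exists>x. \<forall>e\<in>S. (\<Sum>j\<in>X. fst e j * x j) \<le> snd e) \<or>
    (\<exists>l. (\<forall>e\<in>S. 0 \<le> l e) \<and> (\<forall>j\<in>X. (\<Sum>e\<in>S. l e * fst e j) = 0) \<and> (\<Sum>e\<in>S. l e * snd e) < 0)"
  using assms
proof (induction X arbitrary: S rule: finite_induct)
  case empty
  show ?case
  proof (cases "\<exists>e\<in>S. snd e < 0")
    case True
    then obtain e where "e \<in> S" "snd e < 0" by blast
    then show ?thesis
      using empty.prems by (intro disjI2 exI[of _ "\<lambda>c. of_bool (c = e)"]) auto
  qed (auto simp: not_less)
next
  case (insert z X)
  from insert.IH[OF finite_fourier_motzkin[OF insert.prems]] show ?case
    using fourier_motzkin_lift_solution[OF insert.hyps insert.prems]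
      fourier_motzkin_lift_certificate[OF insert.prems] by blast
qed

text \<open>Rows of the indexed system may coincide; a certificate on the set of distinct rows is
  spread evenly over the indices carrying each row.\<close>

lemma reweight_over_image:
  fixes h :: "'i \<Rightarrow> 'e" and l :: "'e \<Rightarrow> real"
  assumes "finite I" "\<forall>e\<in>h ` I. 0 \<le> l e"
  obtains l' where "\<forall>i\<in>I. 0 \<le> l' i" "\<And>g. (\<Sum>i\<in>I. l' i * g (h i)) = (\<Sum>e\<in>h ` I. l e * g e)"
proof
  define n where "n e = real (card {i\<in>I. h i = e})" for e
  have n_pos: "0 < n e" if "e \<in> h ` I" for e
    using that assms(1) by (auto simp: n_def card_gt_0_iff)
  show "\<forall>i\<in>I. 0 \<le> l (h i) / n (h i)"
    using assms(2) n_pos by (simp add: less_imp_le)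
  fix g :: "'e \<Rightarrow> real"
  have "(\<Sum>i\<in>I. l (h i) / n (h i) * g (h i)) = (\<Sum>e\<in>h ` I. \<Sum>i\<in>{i\<in>I. h i = e}. l e / n e * g e)"
    by (subst sum.image_gen[OF assms(1), where g = h]) (intro sum.cong refl, simp)
  also have "\<dots> = (\<Sum>e\<in>h ` I. n e * (l e / n e * g e))"
    by (simp add: n_def)
  also have "\<dots> = (\<Sum>e\<in>h ` I. l e * g e)"
    using n_pos by (intro sum.cong refl) (simp add: less_imp_neq[symmetric])
  finally show "(\<Sum>i\<in>I. l (h i) / n (h i) * g (h i)) = (\<Sum>e\<in>h ` I. l e * g e)" .
qed

theorem farkas:
  fixes A :: "'i \<Rightarrow> 'x \<Rightarrow> real" and b :: "'i \<Rightarrow> real"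
  assumes "finite X" "finite I"
  shows "(\<exists>x. \<forall>i\<in>I. (\<Sum>j\<in>X. A i j * x j) \<le> b i) \<or>
    (\<exists>l. (\<forall>i\<in>I. 0 \<le> l i) \<and> (\<forall>j\<in>X. (\<Sum>i\<in>I. l i * A i j) = 0) \<and> (\<Sum>i\<in>I. l i * b i) < 0)"
proof -
  define h where "h i = (A i, b i)" for i
  from farkas_rows[OF assms(1) finite_imageI[OF assms(2)], of h] show ?thesis
  proof (elim disjE exE conjE)
    fix l assume "\<forall>e\<in>h ` I. 0 \<le> l e" "\<forall>j\<in>X. (\<Sum>e\<in>h ` I. l e * fst e j) = 0"
      "(\<Sum>e\<in>h ` I. l e * snd e) < 0"
    moreover obtain l' where "\<forall>i\<in>I. 0 \<le> l' i"
      and reweight: "\<And>g. (\<Sum>i\<in>I. l' i * g (h i)) = (\<Sum>e\<in>h ` I. l e * g e)"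
      using reweight_over_image[OF assms(2) \<open>\<forall>e\<in>h ` I. 0 \<le> l e\<close>] by blast
    ultimately show ?thesis
      using reweight[of "\<lambda>e. fst e _"] reweight[of snd] by (auto simp: h_def)
  qed (auto simp: h_def)
qed

lemma sum_Inl_Inr_option:
  assumes "finite C" "finite I"
  shows "(\<Sum>r\<in>Inl ` C \<union> Inr ` insert None (Some ` I). f r)
    = (\<Sum>c\<in>C. f (Inl c)) + f (Inr None) + (\<Sum>i\<in>I. f (Inr (Some i)))"
proof -
  have "Inl ` C \<union> Inr ` insert None (Some ` I) = insert (Inr None) (Inl ` C \<union> Inr ` Some ` I)"
    by auto
  moreover have "(\<Sum>r\<in>insert (Inr None) (Inl ` C \<union> Inr ` Some ` I). f r)
      = f (Inr None) + (\<Sum>r\<in>Inl ` C \<union> Inr ` Some ` I. f r)"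
    using assms by (intro sum.insert) auto
  moreover have "(\<Sum>r\<in>Inl ` C \<union> Inr ` Some ` I. f r) = (\<Sum>r\<in>Inl ` C. f r) + (\<Sum>r\<in>Inr ` Some ` I. f r)"
    using assms by (intro sum.union_disjoint) auto
  ultimately show ?thesis
    by (simp add: sum.reindex inj_on_def add_ac)
qed

text \<open>Feasibility over the simplex is tested with the homogeneous system x \<ge> 0, sum x C \<ge> 1,
  (\<Sum>c\<in>C. (M i c - \<beta> i) * x c) \<le> 0; its Farkas certificates are what the hypothesis rules out.\<close>

lemma simplex_lp_duality:
  fixes M :: "'i \<Rightarrow> 'c \<Rightarrow> real" and \<beta> :: "'i \<Rightarrow> real"
  assumes "finite C" "finite I"
    and dual: "\<And>w. \<forall>i\<in>I. 0 \<le> w i \<Longrightarrow> \<exists>q. (\<forall>c\<in>C. 0 \<le> q c) \<and> sum q C = 1 \<and>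
      (\<Sum>i\<in>I. w i * (\<Sum>c\<in>C. M i c * q c)) \<le> (\<Sum>i\<in>I. w i * \<beta> i)"
  shows "\<exists>p. (\<forall>c\<in>C. 0 \<le> p c) \<and> sum p C = 1 \<and> (\<forall>i\<in>I. (\<Sum>c\<in>C. M i c * p c) \<le> \<beta> i)"
proof -
  define J :: "('c + 'i option) set" where "J = Inl ` C \<union> Inr ` insert None (Some ` I)"
  define A :: "'c + 'i option \<Rightarrow> 'c \<Rightarrow> real" where
    "A r j = (case r of Inl c \<Rightarrow> - of_bool (j = c) | Inr None \<Rightarrow> -1 | Inr (Some i) \<Rightarrow> M i j - \<beta> i)"
    for r j
  define b :: "'c + 'i option \<Rightarrow> real" where "b r = (case r of Inr None \<Rightarrow> -1 | _ \<Rightarrow> 0)" for r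
  have J_mem: "Inl c \<in> J \<longleftrightarrow> c \<in> C" "Inr None \<in> J" "Inr (Some i) \<in> J \<longleftrightarrow> i \<in> I" for c i
    by (auto simp: J_def)
  have sum_J: "(\<Sum>r\<in>J. f r) = (\<Sum>c\<in>C. f (Inl c)) + f (Inr None) + (\<Sum>i\<in>I. f (Inr (Some i)))" for f
    unfolding J_def by (rule sum_Inl_Inr_option[OF assms(1,2)])
  have row: "(\<Sum>j\<in>C. A r j * x j) = (case r of Inl c \<Rightarrow> - x c | Inr None \<Rightarrow> - sum x C
      | Inr (Some i) \<Rightarrow> (\<Sum>j\<in>C. M i j * x j) - \<beta> i * sum x C)" if "r \<in> J" for r x
    using that assms(1)
    by (auto simp: J_def A_def sum_negf left_diff_distrib sum_subtractf sum_distrib_left)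
  have "finite J"
    using assms(1,2) by (simp add: J_def)
  from farkas[OF assms(1) this, of A b] show ?thesis
  proof (elim disjE exE)
    fix x assume x: "\<forall>r\<in>J. (\<Sum>j\<in>C. A r j * x j) \<le> b r"
    have "0 \<le> x c" if "c \<in> C" for c
      using x[rule_format, of "Inl c"] that by (simp add: J_mem row b_def)
    moreover have "1 \<le> sum x C"
      using x[rule_format, of "Inr None"] by (simp add: J_mem row b_def)
    moreover have "(\<Sum>c\<in>C. M i c * x c) \<le> \<beta> i * sum x C" if "i \<in> I" for i
      using x[rule_format, of "Inr (Some i)"] that by (simp add: J_mem row b_def)
    ultimately show ?thesis
      by (intro exI[of _ "\<lambda>c. x c / sum x C"])
        (auto simp: divide_simps simp flip: sum_divide_distrib)
  next
    fix y assume y: "(\<forall>r\<in>J. 0 \<le> y r) \<and> (\<forall>j\<in>C. (\<Sum>r\<in>J. y r * A r j) = 0) \<and> (\<Sum>r\<in>J. y r * b r) < 0"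
    define w where "w i = y (Inr (Some i))" for i
    obtain q where q: "\<forall>c\<in>C. 0 \<le> q c" "sum q C = 1"
      and q_dual: "(\<Sum>i\<in>I. w i * (\<Sum>c\<in>C. M i c * q c)) \<le> (\<Sum>i\<in>I. w i * \<beta> i)"
      using dual[of w] y by (auto simp: w_def J_mem)
    have "0 = (\<Sum>j\<in>C. q j * (\<Sum>r\<in>J. y r * A r j))"
      using y by simp
    also have "\<dots> = (\<Sum>r\<in>J. y r * (\<Sum>j\<in>C. A r j * q j))"
      unfolding sum_distrib_left by (subst sum.swap) (simp add: ac_simps)
    also have "\<dots> = - (\<Sum>c\<in>C. y (Inl c) * q c) - y (Inr None) +
        ((\<Sum>i\<in>I. w i * (\<Sum>c\<in>C. M i c * q c)) - (\<Sum>i\<in>I. w i * \<beta> i))"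
      using q(2) by (simp add: sum_J row J_mem w_def sum_negf right_diff_distrib sum_subtractf)
    also have "\<dots> < 0"
    proof -
      have "0 \<le> (\<Sum>c\<in>C. y (Inl c) * q c)"
        using q(1) y by (intro sum_nonneg) (auto simp: J_mem)
      moreover have "0 < y (Inr None)"
        using y by (simp add: sum_J b_def)
      ultimately show ?thesis
        using q_dual by linarith
    qed
    finally show ?thesis by simp
  qed
qed

lemma strict_linear_order_on_subset:
  "strict_linear_order_on C R \<Longrightarrow> D \<subseteq> C \<Longrightarrow> strict_linear_order_on D R"
  unfolding strict_linear_order_on_def by blast

lemma strict_linear_order_on_asym:
  "strict_linear_order_on C R \<Longrightarrow> a \<in> C \<Longrightarrow> b \<in> C \<Longrightarrow> R a b \<Longrightarrow> \<not> R b a"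
  unfolding strict_linear_order_on_def by blast

lemma strict_linear_order_on_trans:
  "strict_linear_order_on C R \<Longrightarrow> a \<in> C \<Longrightarrow> b \<in> C \<Longrightarrow> c \<in> C \<Longrightarrow> R a b \<Longrightarrow> R b c \<Longrightarrow> R a c"
  unfolding strict_linear_order_on_def by blast

lemma strict_linear_order_on_has_top:
  assumes "finite D" "D \<noteq> {}" "strict_linear_order_on D R"
  shows "\<exists>x\<in>D. \<forall>c\<in>D - {x}. R x c"
  using assms
proof (induction D rule: finite_ne_induct)
  case (singleton x)
  then show ?case by auto
next
  case (insert y F)
  have order: "strict_linear_order_on (insert y F) R"
    by fact
  obtain x where x: "x \<in> F" "\<forall>c\<in>F - {x}. R x c"
    using insert.IH strict_linear_order_on_subset[OF order] by blast
  have "y \<noteq> x"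
    using x insert.hyps by auto
  then have "R x y \<or> R y x"
    using order x(1) unfolding strict_linear_order_on_def by blast
  then show ?case
  proof
    assume "R y x"
    then have "\<forall>c\<in>insert y F - {y}. R y c"
      using x strict_linear_order_on_trans[OF order, of y x] by auto
    then show ?thesis by blast
  next
    assume "R x y"
    then show ?thesis
      using x by blast
  qed
qed

lemma strict_linear_order_top_induct [consumes 2, case_names empty insert]:
  assumes "finite C" "strict_linear_order_on C R" "Q {}"
    and insert: "\<And>x D. finite D \<Longrightarrow> insert x D \<subseteq> C \<Longrightarrow> x \<notin> D \<Longrightarrow> \<forall>c\<in>D. R x c \<Longrightarrow> Q D \<Longrightarrow>
      Q (insert x D)"
  shows "Q C"
  using assms(1)
proof (induction C rule: finite_remove_induct)
  case empty
  then show ?case by fact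
next
  case (remove A)
  obtain x where x: "x \<in> A" "\<forall>c\<in>A - {x}. R x c"
    using strict_linear_order_on_has_top[OF remove.hyps(1,2)]
      strict_linear_order_on_subset[OF assms(2) remove.hyps(3)] by blast
  have "Q (insert x (A - {x}))"
    using x remove by (intro insert) auto
  moreover have "insert x (A - {x}) = A"
    using x by blast
  ultimately show ?case by simp
qed

definition mass_below :: "'c set \<Rightarrow> ('c \<Rightarrow> 'c \<Rightarrow> bool) \<Rightarrow> ('c \<Rightarrow> real) \<Rightarrow> 'c \<Rightarrow> real" where
  "mass_below D R p a = (\<Sum>c\<in>{c\<in>D. R a c}. p c)"

definition mass_weakly_below :: "'c set \<Rightarrow> ('c \<Rightarrow> 'c \<Rightarrow> bool) \<Rightarrow> ('c \<Rightarrow> real) \<Rightarrow> 'c \<Rightarrow> real" where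
  "mass_weakly_below D R p a = (\<Sum>c\<in>{c\<in>D. c = a \<or> R a c}. p c)"

lemma mass_below_insert_top:
  assumes "strict_linear_order_on (insert x D) R" "x \<notin> D" "\<forall>c\<in>D. R x c"
  shows "mass_below (insert x D) R p x = sum p D"
    and "a \<in> D \<Longrightarrow> mass_below (insert x D) R p a = mass_below D R p a"
proof -
  have "{c\<in>insert x D. R x c} = D"
    using assms unfolding strict_linear_order_on_def by auto
  then show "mass_below (insert x D) R p x = sum p D"
    by (simp add: mass_below_def)
  assume "a \<in> D"
  then have "{c\<in>insert x D. R a c} = {c\<in>D. R a c}"
    using assms strict_linear_order_on_asym[OF assms(1), of x a] by auto
  then show "mass_below (insert x D) R p a = mass_below D R p a"
    by (simp add: mass_below_def)
qed

text \<open>The left-hand side is a lower Riemann sum of the integral of max 0 (s - t) over [0, sum q C].\<close>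

lemma weighted_excess_le:
  fixes q :: "'c \<Rightarrow> real"
  assumes "finite C" "strict_linear_order_on C R" "\<forall>c\<in>C. 0 \<le> q c"
  shows "(\<Sum>a\<in>C. q a * max 0 (mass_below C R q a - t)) \<le> (max 0 (sum q C - t))\<^sup>2 / 2"
  using assms(1,2)
proof (induction rule: strict_linear_order_top_induct)
  case empty
  then show ?case by simp
next
  case (insert x D)
  have order: "strict_linear_order_on (insert x D) R"
    using assms(2) insert.hyps(2) by (rule strict_linear_order_on_subset)
  define u where "u = max 0 (sum q D - t)"
  have qx: "0 \<le> q x"
    using assms(3) insert.hyps(2) by auto
  have "(\<Sum>a\<in>insert x D. q a * max 0 (mass_below (insert x D) R q a - t))
      = q x * u + (\<Sum>a\<in>D. q a * max 0 (mass_below D R q a - t))"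
    using insert.hyps by (simp add: mass_below_insert_top[OF order] u_def)
  also have "\<dots> \<le> q x * u + u\<^sup>2 / 2"
    using insert.IH by (simp add: u_def)
  also have "\<dots> \<le> (max 0 (sum q (insert x D) - t))\<^sup>2 / 2"
  proof (cases "sum q D \<le> t")
    case True
    then show ?thesis by (simp add: u_def)
  next
    case False
    then have "u + q x = sum q (insert x D) - t" "0 \<le> u + q x"
      using insert.hyps qx by (auto simp: u_def)
    moreover have "q x * u + u\<^sup>2 / 2 \<le> (u + q x)\<^sup>2 / 2"
      using qx by (simp add: power2_eq_square algebra_simps)
    ultimately show ?thesis by simp
  qed
  finally show ?case .
qed

lemma sum_count_mult_eq_sum_mass_below:
  assumes "finite C"
  shows "(\<Sum>c\<in>C. (\<Sum>v\<in>W. of_bool (P v a c)) * q c) = (\<Sum>v\<in>W. mass_below C (P v) q a)"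
proof -
  have "(\<Sum>c\<in>C. (\<Sum>v\<in>W. of_bool (P v a c)) * q c) = (\<Sum>v\<in>W. \<Sum>c\<in>C. of_bool (P v a c) * q c)"
    unfolding sum_distrib_right by (rule sum.swap)
  also have "\<dots> = (\<Sum>v\<in>W. mass_below C (P v) q a)"
    using assms by (simp add: mass_below_def Int_def)
  finally show ?thesis .
qed

lemma sum_excess_le_sum_pos_excess:
  fixes x :: "'v \<Rightarrow> real"
  assumes "finite V" "W \<subseteq> V"
  shows "(\<Sum>v\<in>W. x v) - t * real (card W) \<le> (\<Sum>v\<in>V. max 0 (x v - t))"
proof -
  have "(\<Sum>v\<in>W. x v) - t * real (card W) = (\<Sum>v\<in>W. x v - t)"
    by (simp add: sum_subtractf)
  also have "\<dots> \<le> (\<Sum>v\<in>W. max 0 (x v - t))"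
    by (intro sum_mono) simp
  also have "\<dots> \<le> (\<Sum>v\<in>V. max 0 (x v - t))"
    using assms by (intro sum_mono2) auto
  finally show ?thesis .
qed

lemma sum_pos_excess_eq:
  fixes x :: "'v \<Rightarrow> real"
  assumes "finite V"
  shows "(\<Sum>v\<in>V. max 0 (x v - t)) = (\<Sum>v\<in>{v\<in>V. t \<le> x v}. x v) - t * real (card {v\<in>V. t \<le> x v})"
proof -
  have "(\<Sum>v\<in>V. max 0 (x v - t)) = (\<Sum>v\<in>{v\<in>V. t \<le> x v}. x v - t)"
    using assms by (simp add: sum.inter_filter max_def)
  then show ?thesis
    by (simp add: sum_subtractf)
qed

text \<open>Against the adversary's mixed strategy w, answer with its marginal q on the candidates.\<close>

lemma excess_dual_feasible:
  fixes V :: "'v set" and C :: "'c set" and w :: "'c \<times> 'v set \<Rightarrow> real"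
  assumes "finite V" "finite C" "C \<noteq> {}" "\<forall>v\<in>V. strict_linear_order_on C (P v)" "t \<le> 1"
    and w: "\<forall>i\<in>C \<times> Pow V. 0 \<le> w i"
  defines "B \<equiv> real (card V) * (1 - t)\<^sup>2 / 2"
  shows "\<exists>q. (\<forall>c\<in>C. 0 \<le> q c) \<and> sum q C = 1 \<and>
    (\<Sum>i\<in>C \<times> Pow V. w i * (\<Sum>v\<in>snd i. mass_below C (P v) q (fst i)))
      \<le> (\<Sum>i\<in>C \<times> Pow V. w i * (B + t * real (card (snd i))))"
proof -
  define \<Lambda> where "\<Lambda> = (\<Sum>i\<in>C \<times> Pow V. w i)"
  have fin: "finite (C \<times> Pow V)"
    using assms(1,2) by simp
  show ?thesis
  proof (cases "\<Lambda> = 0")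
    case True
    then have w_zero: "w i = 0" if "i \<in> C \<times> Pow V" for i
      using w that by (auto simp: \<Lambda>_def sum_nonneg_eq_0_iff[OF fin])
    obtain c0 where "c0 \<in> C"
      using assms(3) by blast
    then show ?thesis
      using assms(2) by (intro exI[of _ "\<lambda>c. of_bool (c = c0)"]) (simp add: w_zero)
  next
    case False
    then have \<Lambda>_pos: "0 < \<Lambda>"
      using w sum_nonneg[of "C \<times> Pow V" w] unfolding \<Lambda>_def by fastforce
    define q where "q a = (\<Sum>W\<in>Pow V. w (a, W)) / \<Lambda>" for a
    define \<Phi> where "\<Phi> a = (\<Sum>v\<in>V. max 0 (mass_below C (P v) q a - t))" for a
    have q_nonneg: "\<forall>c\<in>C. 0 \<le> q c"
      using w \<Lambda>_pos by (auto simp: q_def intro!: divide_nonneg_pos sum_nonneg)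
    have by_candidate: "(\<Sum>i\<in>C \<times> Pow V. w i * f (fst i)) = \<Lambda> * (\<Sum>a\<in>C. q a * f a)" for f
    proof -
      have "(\<Sum>i\<in>C \<times> Pow V. w i * f (fst i)) = (\<Sum>a\<in>C. (\<Sum>W\<in>Pow V. w (a, W)) * f a)"
        by (simp add: sum.cartesian_product' sum_distrib_right)
      also have "\<dots> = \<Lambda> * (\<Sum>a\<in>C. q a * f a)"
        using \<Lambda>_pos by (simp add: q_def sum_distrib_left)
      finally show ?thesis .
    qed
    have q_sum: "sum q C = 1"
      using by_candidate[of "\<lambda>_. 1"] \<Lambda>_pos by (simp add: \<Lambda>_def)
    have "(\<Sum>i\<in>C \<times> Pow V. w i * (\<Sum>v\<in>snd i. mass_below C (P v) q (fst i)))
        - (\<Sum>i\<in>C \<times> Pow V. w i * (B + t * real (card (snd i))))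
        = (\<Sum>i\<in>C \<times> Pow V. w i *
            ((\<Sum>v\<in>snd i. mass_below C (P v) q (fst i)) - t * real (card (snd i)) - B))"
      by (simp add: right_diff_distrib sum_subtractf algebra_simps)
    also have "\<dots> \<le> (\<Sum>i\<in>C \<times> Pow V. w i * (\<Phi> (fst i) - B))"
      using w sum_excess_le_sum_pos_excess[OF assms(1)]
      by (intro sum_mono mult_left_mono) (auto simp: \<Phi>_def)
    also have "\<dots> = \<Lambda> * ((\<Sum>a\<in>C. q a * \<Phi> a) - B)"
      using q_sum by_candidate[of "\<lambda>_. 1"]
      by (simp add: by_candidate right_diff_distrib sum_subtractf flip: sum_distrib_right)
    also have "\<dots> \<le> 0"
    proof -
      have "(\<Sum>a\<in>C. q a * \<Phi> a) = (\<Sum>v\<in>V. \<Sum>a\<in>C. q a * max 0 (mass_below C (P v) q a - t))"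
        unfolding \<Phi>_def sum_distrib_left by (rule sum.swap)
      also have "\<dots> \<le> (\<Sum>v\<in>V. (max 0 (sum q C - t))\<^sup>2 / 2)"
        using assms(2,4) q_nonneg by (intro sum_mono weighted_excess_le) auto
      also have "\<dots> = B"
        using q_sum assms(5) by (simp add: B_def)
      finally show ?thesis
        using \<Lambda>_pos by (simp add: mult_le_0_iff)
    qed
    finally show ?thesis
      using q_nonneg q_sum by (intro exI[of _ q]) simp
  qed
qed

lemma exists_distribution_with_small_excess:
  fixes V :: "'v set" and C :: "'c set" and t :: real
  assumes "finite V" "finite C" "C \<noteq> {}" "\<forall>v\<in>V. strict_linear_order_on C (P v)" "t \<le> 1"
  shows "\<exists>p. (\<forall>c\<in>C. 0 \<le> p c) \<and> sum p C = 1 \<and>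
    (\<forall>a\<in>C. (\<Sum>v\<in>V. max 0 (mass_below C (P v) p a - t)) \<le> real (card V) * (1 - t)\<^sup>2 / 2)"
proof -
  define B where "B = real (card V) * (1 - t)\<^sup>2 / 2"
  define M :: "'c \<times> 'v set \<Rightarrow> 'c \<Rightarrow> real"
    where "M i c = (\<Sum>v\<in>snd i. of_bool (P v (fst i) c))" for i c
  have M_mass: "(\<Sum>c\<in>C. M i c * q c) = (\<Sum>v\<in>snd i. mass_below C (P v) q (fst i))" for i q
    unfolding M_def by (rule sum_count_mult_eq_sum_mass_below[OF assms(2)])
  obtain p where p: "\<forall>c\<in>C. 0 \<le> p c" "sum p C = 1"
    and p_bound: "\<forall>i\<in>C \<times> Pow V. (\<Sum>c\<in>C. M i c * p c) \<le> B + t * real (card (snd i))"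
    using simplex_lp_duality[OF assms(2), of "C \<times> Pow V" M "\<lambda>i. B + t * real (card (snd i))"]
      excess_dual_feasible[OF assms] assms(1,2) by (auto simp: M_mass B_def)
  have "(\<Sum>v\<in>V. max 0 (mass_below C (P v) p a - t)) \<le> B" if "a \<in> C" for a
    using p_bound[rule_format, of "(a, {v\<in>V. t \<le> mass_below C (P v) p a})"] that assms(1)
    by (simp add: M_mass sum_pos_excess_eq)
  then show ?thesis
    using p by (auto simp: B_def)
qed

lemma power_tangent_le:
  fixes a b :: real
  assumes "0 \<le> a" "a \<le> b"
  shows "real (k + 1) * a ^ k * (b - a) \<le> b ^ (k + 1) - a ^ (k + 1)"
    and "1 \<le> k \<Longrightarrow> a < b \<Longrightarrow> real (k + 1) * a ^ k * (b - a) < b ^ (k + 1) - a ^ (k + 1)"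
proof -
  have diff: "b ^ (k + 1) - a ^ (k + 1) = (b - a) * (\<Sum>i<k + 1. a ^ (k - i) * b ^ i)"
    using power_diff_sumr2[of b "k + 1" a] by simp
  have term_ge: "a ^ k \<le> a ^ (k - i) * b ^ i" if "i < k + 1" for i
  proof -
    have "a ^ k = a ^ (k - i) * a ^ i"
      using that by (simp flip: power_add)
    also have "\<dots> \<le> a ^ (k - i) * b ^ i"
      using assms by (intro mult_left_mono power_mono) auto
    finally show ?thesis .
  qed
  have "real (k + 1) * a ^ k = (\<Sum>i<k + 1. a ^ k)"
    by simp
  also have "\<dots> \<le> (\<Sum>i<k + 1. a ^ (k - i) * b ^ i)"
    using term_ge by (intro sum_mono) auto
  finally show "real (k + 1) * a ^ k * (b - a) \<le> b ^ (k + 1) - a ^ (k + 1)"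
    unfolding diff using assms by (simp add: mult.commute mult_left_mono)
  assume "1 \<le> k" "a < b"
  have "\<exists>i\<in>{..<k + 1}. a ^ k < a ^ (k - i) * b ^ i"
    using assms \<open>1 \<le> k\<close> \<open>a < b\<close> by (intro bexI[of _ k]) (auto intro: power_strict_mono)
  then have "(\<Sum>i<k + 1. a ^ k) < (\<Sum>i<k + 1. a ^ (k - i) * b ^ i)"
    using term_ge by (intro sum_strict_mono_ex1) auto
  then show "real (k + 1) * a ^ k * (b - a) < b ^ (k + 1) - a ^ (k + 1)"
    unfolding diff using \<open>a < b\<close> by (simp add: mult.commute)
qed

text \<open>ramp_integral \<theta> k y is the integral of (\<theta> - u) d(u^k) over [0, y].\<close>

definition ramp_integral :: "real \<Rightarrow> nat \<Rightarrow> real \<Rightarrow> real" where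
  "ramp_integral \<theta> k y = \<theta> * y ^ k - real k / real (k + 1) * y ^ (k + 1)"

lemma ramp_integral_diff:
  "ramp_integral \<theta> k b - ramp_integral \<theta> k a - (\<theta> - b) * (b ^ k - a ^ k)
    = (b ^ (k + 1) - a ^ (k + 1) - real (k + 1) * a ^ k * (b - a)) / real (k + 1)"
proof -
  have field_identity: "\<theta> * B - r / (r + 1) * (b * B) - (\<theta> * A - r / (r + 1) * (a * A)) - (\<theta> - b) * (B - A)
      = (b * B - a * A - (r + 1) * A * (b - a)) / (r + 1)" if "0 \<le> r" for r A B :: real
  proof -
    have "r + 1 \<noteq> 0"
      using that by simp
    then show ?thesis
      by (simp add: divide_simps) (simp add: algebra_simps)
  qed
  have "real (k + 1) = real k + 1" and "\<And>y :: real. y ^ (k + 1) = y * y ^ k"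
    by simp_all
  then show ?thesis
    unfolding ramp_integral_def by (simp only:) (rule field_identity, simp)
qed

lemma ramp_integral_step:
  fixes a b :: real
  assumes "0 \<le> a" "a \<le> b"
  shows "(\<theta> - b) * (b ^ k - a ^ k) \<le> ramp_integral \<theta> k b - ramp_integral \<theta> k a"
    and "1 \<le> k \<Longrightarrow> a < b \<Longrightarrow> (\<theta> - b) * (b ^ k - a ^ k) < ramp_integral \<theta> k b - ramp_integral \<theta> k a"
proof -
  have "0 \<le> (b ^ (k + 1) - a ^ (k + 1) - real (k + 1) * a ^ k * (b - a)) / real (k + 1)"
    using power_tangent_le(1)[OF assms, of k] by simp
  then show "(\<theta> - b) * (b ^ k - a ^ k) \<le> ramp_integral \<theta> k b - ramp_integral \<theta> k a"
    using ramp_integral_diff[of \<theta> k b a] by linarith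
  assume "1 \<le> k" "a < b"
  then have "0 < (b ^ (k + 1) - a ^ (k + 1) - real (k + 1) * a ^ k * (b - a)) / real (k + 1)"
    using power_tangent_le(2)[OF assms, of k] by simp
  then show "(\<theta> - b) * (b ^ k - a ^ k) < ramp_integral \<theta> k b - ramp_integral \<theta> k a"
    using ramp_integral_diff[of \<theta> k b a] by linarith
qed

text \<open>A voter whose favourite sampled candidate has mass y weakly below it contributes
  deficit \<theta> t y; for 0 \<le> t \<le> \<theta>, deficit_integral \<theta> t k y is the integral of
  deficit \<theta> t u d(u^k) over [0, y], the value for a continuous distribution.\<close>

definition deficit :: "real \<Rightarrow> real \<Rightarrow> real \<Rightarrow> real" where
  "deficit \<theta> t y = \<theta> - max t (min y \<theta>)"

definition deficit_integral :: "real \<Rightarrow> real \<Rightarrow> nat \<Rightarrow> real \<Rightarrow> real" where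
  "deficit_integral \<theta> t k y =
     (\<theta> - t) * min y t ^ k + ramp_integral \<theta> k (max t (min y \<theta>)) - ramp_integral \<theta> k t"

lemma deficit_nonneg: "t \<le> \<theta> \<Longrightarrow> 0 \<le> deficit \<theta> t y"
  by (simp add: deficit_def)

lemma deficit_le: "deficit \<theta> t y \<le> \<theta> - t"
  by (simp add: deficit_def)

lemma deficit_ge: "\<theta> - t - max 0 (y - t) \<le> deficit \<theta> t y"
  by (simp add: deficit_def)

lemma deficit_integral_0: "1 \<le> k \<Longrightarrow> 0 \<le> t \<Longrightarrow> t \<le> \<theta> \<Longrightarrow> deficit_integral \<theta> t k 0 = 0"
  by (simp add: deficit_integral_def)

lemma deficit_integral_saturate:
  "t \<le> \<theta> \<Longrightarrow> \<theta> \<le> y \<Longrightarrow> deficit_integral \<theta> t k y = deficit_integral \<theta> t k \<theta>"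
  by (simp add: deficit_integral_def)

text \<open>Pointwise deficit \<theta> t b \<le> deficit \<theta> t u for u \<le> b, hence a right-endpoint Riemann-Stieltjes
  bound; it is strict across a point m where deficit is strictly decreasing.\<close>

lemma deficit_step:
  fixes a b t \<theta> :: real
  assumes "0 \<le> t" "t \<le> \<theta>" "0 \<le> a" "a \<le> b"
  shows "deficit \<theta> t b * (b ^ k - a ^ k) \<le> deficit_integral \<theta> t k b - deficit_integral \<theta> t k a"
    and "1 \<le> k \<Longrightarrow> a < m \<Longrightarrow> m \<le> b \<Longrightarrow> t < m \<Longrightarrow> m < \<theta> \<Longrightarrow>
      deficit \<theta> t b * (b ^ k - a ^ k) < deficit_integral \<theta> t k b - deficit_integral \<theta> t k a"
proof -
  define ca cb where "ca = max t (min a \<theta>)" and "cb = max t (min b \<theta>)"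
  have split_power: "y ^ k = min y t ^ k + (max t (min y \<theta>) ^ k - t ^ k) + (max y \<theta> ^ k - \<theta> ^ k)"
    for y :: real
  proof (cases "y \<le> t")
    case True
    then have "min y t = y" "max t (min y \<theta>) = t" "max y \<theta> = \<theta>"
      using assms(2) by auto
    then show ?thesis by simp
  next
    case False
    then have "min y t = t" "max t (min y \<theta>) = min y \<theta>" "max y \<theta> ^ k - \<theta> ^ k = y ^ k - min y \<theta> ^ k"
      using assms(2) by (auto simp: min_def max_def)
    then show ?thesis by simp
  qed
  have "b ^ k - a ^ k = (min b t ^ k - min a t ^ k) + (cb ^ k - ca ^ k) + (max b \<theta> ^ k - max a \<theta> ^ k)"
    unfolding ca_def cb_def using split_power[of a] split_power[of b] by linarith
  moreover have "deficit \<theta> t b * (max b \<theta> ^ k - max a \<theta> ^ k) = 0"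
    using assms(2,4) by (cases "b \<le> \<theta>") (auto simp: deficit_def max_def)
  moreover have "deficit \<theta> t b = \<theta> - cb"
    by (simp add: deficit_def cb_def)
  ultimately have decompose: "deficit \<theta> t b * (b ^ k - a ^ k)
      = deficit \<theta> t b * (min b t ^ k - min a t ^ k) + (\<theta> - cb) * (cb ^ k - ca ^ k)"
    by (simp only: distrib_left)
  have "min a t ^ k \<le> min b t ^ k"
    using assms by (intro power_mono) auto
  then have low: "deficit \<theta> t b * (min b t ^ k - min a t ^ k) \<le> (\<theta> - t) * (min b t ^ k - min a t ^ k)"
    by (intro mult_right_mono deficit_le) simp
  have clamp: "0 \<le> ca" "ca \<le> cb"
    using assms by (auto simp: ca_def cb_def)
  have integral: "deficit_integral \<theta> t k b - deficit_integral \<theta> t k a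
      = (\<theta> - t) * (min b t ^ k - min a t ^ k) + (ramp_integral \<theta> k cb - ramp_integral \<theta> k ca)"
    by (simp add: deficit_integral_def ca_def cb_def algebra_simps)
  show "deficit \<theta> t b * (b ^ k - a ^ k) \<le> deficit_integral \<theta> t k b - deficit_integral \<theta> t k a"
    using decompose low integral ramp_integral_step(1)[OF clamp, of \<theta> k] by linarith
  assume "1 \<le> k" "a < m" "m \<le> b" "t < m" "m < \<theta>"
  then have "ca < cb"
    by (auto simp: ca_def cb_def)
  then show "deficit \<theta> t b * (b ^ k - a ^ k) < deficit_integral \<theta> t k b - deficit_integral \<theta> t k a"
    using decompose low integral ramp_integral_step(2)[OF clamp \<open>1 \<le> k\<close>, of \<theta>] by linarith
qed

lemma mass_weakly_below_insert_top:
  assumes "strict_linear_order_on (insert x D) R" "x \<notin> D" "\<forall>c\<in>D. R x c"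
  shows "mass_weakly_below (insert x D) R p x = sum p (insert x D)"
    and "c \<in> D \<Longrightarrow> mass_weakly_below (insert x D) R p c = mass_weakly_below D R p c"
proof -
  have "{c'\<in>insert x D. c' = x \<or> R x c'} = insert x D"
    using assms by auto
  then show "mass_weakly_below (insert x D) R p x = sum p (insert x D)"
    by (simp add: mass_weakly_below_def)
  assume "c \<in> D"
  then have "{c'\<in>insert x D. c' = c \<or> R c c'} = {c'\<in>D. c' = c \<or> R c c'}"
    using assms strict_linear_order_on_asym[OF assms(1), of x c] by auto
  then show "mass_weakly_below (insert x D) R p c = mass_weakly_below D R p c"
    by (simp add: mass_weakly_below_def)
qed

lemma mass_weakly_below_le_sum:
  "finite D \<Longrightarrow> \<forall>c\<in>D. 0 \<le> p c \<Longrightarrow> mass_weakly_below D R p c \<le> sum p D"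
  unfolding mass_weakly_below_def by (intro sum_mono2) auto

lemma sum_prod_PiE_eq_power:
  fixes p :: "'c \<Rightarrow> real"
  assumes "finite D"
  shows "(\<Sum>f\<in>{..<k} \<rightarrow>\<^sub>E D. \<Prod>i<k. p (f i)) = sum p D ^ k"
  using prod_sum_PiE[of "{..<k}" "\<lambda>_. D" "\<lambda>_. p"] assms by simp

text \<open>A sample of k candidates drawn independently from p is a function in PiE {..<k} (\<lambda>_. D),
  drawn with probability the product of the masses of its values.\<close>

definition top_sample_mass :: "nat \<Rightarrow> 'c set \<Rightarrow> ('c \<Rightarrow> 'c \<Rightarrow> bool) \<Rightarrow> ('c \<Rightarrow> real) \<Rightarrow> (nat \<Rightarrow> 'c) \<Rightarrow> real"
  where "top_sample_mass k D R p f = Max ((\<lambda>i. mass_weakly_below D R p (f i)) ` {..<k})"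

definition expected_deficit ::
    "nat \<Rightarrow> real \<Rightarrow> real \<Rightarrow> 'c set \<Rightarrow> ('c \<Rightarrow> 'c \<Rightarrow> bool) \<Rightarrow> ('c \<Rightarrow> real) \<Rightarrow> real" where
  "expected_deficit k \<theta> t D R p =
     (\<Sum>f\<in>{..<k} \<rightarrow>\<^sub>E D. (\<Prod>i<k. p (f i)) * deficit \<theta> t (top_sample_mass k D R p f))"

lemma expected_deficit_insert_top:
  assumes "finite D" "strict_linear_order_on (insert x D) R" "x \<notin> D" "\<forall>c\<in>D. R x c"
    and "\<forall>c\<in>insert x D. 0 \<le> p c"
  shows "expected_deficit k \<theta> t (insert x D) R p = expected_deficit k \<theta> t D R p +
    deficit \<theta> t (sum p (insert x D)) * (sum p (insert x D) ^ k - sum p D ^ k)"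
proof -
  define A where "A = {..<k} \<rightarrow>\<^sub>E insert x D"
  define A0 where "A0 = {..<k} \<rightarrow>\<^sub>E D"
  define g where "g f = (\<Prod>i<k. p (f i)) * deficit \<theta> t (top_sample_mass k (insert x D) R p f)" for f
  have "finite A" "A0 \<subseteq> A"
    using assms(1) by (auto simp: A_def A0_def intro!: finite_PiE PiE_mono)
  then have "expected_deficit k \<theta> t (insert x D) R p = sum g A0 + sum g (A - A0)"
    by (simp add: expected_deficit_def A_def g_def sum.subset_diff)
  moreover have "sum g A0 = expected_deficit k \<theta> t D R p"
    unfolding expected_deficit_def A0_def[symmetric] g_def top_sample_mass_def
  proof (intro sum.cong refl)
    fix f assume "f \<in> A0"
    then have "(\<lambda>i. mass_weakly_below (insert x D) R p (f i)) ` {..<k}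
        = (\<lambda>i. mass_weakly_below D R p (f i)) ` {..<k}"
      using mass_weakly_below_insert_top(2)[OF assms(2-4)]
      by (intro image_cong refl) (auto simp: A0_def PiE_iff)
    then show "(\<Prod>i<k. p (f i)) * deficit \<theta> t (Max ((\<lambda>i. mass_weakly_below (insert x D) R p (f i)) ` {..<k}))
        = (\<Prod>i<k. p (f i)) * deficit \<theta> t (Max ((\<lambda>i. mass_weakly_below D R p (f i)) ` {..<k}))"
      by simp
  qed
  moreover have "top_sample_mass k (insert x D) R p f = sum p (insert x D)" if "f \<in> A - A0" for f
  proof -
    have "\<exists>i<k. f i = x"
      using that unfolding A_def A0_def PiE_iff Diff_iff by blast
    then obtain i where "i < k" "f i = x"
      by blast
    then show ?thesis
      unfolding top_sample_mass_def using assms(1,5) mass_weakly_below_insert_top(1)[OF assms(2-4)]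
      by (intro Max_eqI) (auto intro: mass_weakly_below_le_sum image_eqI[of _ _ i])
  qed
  then have "sum g (A - A0) = (\<Sum>f\<in>A - A0. \<Prod>i<k. p (f i)) * deficit \<theta> t (sum p (insert x D))"
    by (simp add: g_def sum_distrib_right)
  moreover have "(\<Sum>f\<in>A - A0. \<Prod>i<k. p (f i)) = sum p (insert x D) ^ k - sum p D ^ k"
    using \<open>finite A\<close> \<open>A0 \<subseteq> A\<close> assms(1)
    by (simp add: sum_diff A_def A0_def sum_prod_PiE_eq_power)
  ultimately show ?thesis
    by (simp add: mult.commute)
qed

text \<open>The point m \<in> (t, \<theta>) only serves to locate the step that makes the bound strict.\<close>

lemma expected_deficit_bound:
  fixes C :: "'c set"
  assumes "finite C" "strict_linear_order_on C R" "\<forall>c\<in>C. 0 \<le> p c"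
    and "1 \<le> k" "0 \<le> t" "t < m" "m < \<theta>"
  shows "expected_deficit k \<theta> t C R p \<le> deficit_integral \<theta> t k (sum p C) \<and>
    (m \<le> sum p C \<longrightarrow> expected_deficit k \<theta> t C R p < deficit_integral \<theta> t k (sum p C))"
  using assms(1,2)
proof (induction rule: strict_linear_order_top_induct)
  case empty
  have "{..<k} \<rightarrow>\<^sub>E ({} :: 'c set) = {}"
    using assms(4) by (intro PiE_empty_range[of 0]) auto
  then show ?case
    using assms(4-7) unfolding expected_deficit_def by (simp add: deficit_integral_0)
next
  case (insert x D)
  define s where "s = sum p D"
  have p: "\<forall>c\<in>insert x D. 0 \<le> p c"
    using assms(3) insert.hyps(2) by blast
  have "0 \<le> s" "0 \<le> p x" and sum_insert: "sum p (insert x D) = s + p x"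
    using insert.hyps(1,3) p by (auto simp: s_def intro: sum_nonneg)
  then have step: "deficit \<theta> t (s + p x) * ((s + p x) ^ k - s ^ k)
      \<le> deficit_integral \<theta> t k (s + p x) - deficit_integral \<theta> t k s"
    and step_strict: "s < m \<Longrightarrow> m \<le> s + p x \<Longrightarrow> deficit \<theta> t (s + p x) * ((s + p x) ^ k - s ^ k)
      < deficit_integral \<theta> t k (s + p x) - deficit_integral \<theta> t k s"
    using deficit_step[where a = s and b = "s + p x" and t = t and \<theta> = \<theta> and k = k] assms(4-7)
    by simp_all
  have E: "expected_deficit k \<theta> t (insert x D) R p =
      expected_deficit k \<theta> t D R p + deficit \<theta> t (s + p x) * ((s + p x) ^ k - s ^ k)"
    using expected_deficit_insert_top[OF insert.hyps(1)
        strict_linear_order_on_subset[OF assms(2) insert.hyps(2)] insert.hyps(3,4) p]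
    by (simp add: s_def sum_insert)
  note IH = insert.IH[folded s_def]
  show ?case
    unfolding E sum_insert
  proof (intro conjI impI)
    show "expected_deficit k \<theta> t D R p + deficit \<theta> t (s + p x) * ((s + p x) ^ k - s ^ k)
        \<le> deficit_integral \<theta> t k (s + p x)"
      using IH step by linarith
    assume "m \<le> s + p x"
    then show "expected_deficit k \<theta> t D R p + deficit \<theta> t (s + p x) * ((s + p x) ^ k - s ^ k)
        < deficit_integral \<theta> t k (s + p x)"
      using IH step step_strict by (cases "m \<le> s") linarith+
  qed
qed

lemma exists_lt_of_weighted_sum_lt:
  fixes w g :: "'a \<Rightarrow> real"
  assumes "finite A" "\<forall>a\<in>A. 0 \<le> w a" "sum w A = 1" "(\<Sum>a\<in>A. w a * g a) < c"
  shows "\<exists>a\<in>A. g a < c"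
proof (rule ccontr)
  assume "\<not> (\<exists>a\<in>A. g a < c)"
  then have "(\<Sum>a\<in>A. w a * c) \<le> (\<Sum>a\<in>A. w a * g a)"
    using assms(2) by (intro sum_mono mult_left_mono) auto
  with assms(3,4) show False
    by (simp flip: sum_distrib_right)
qed

lemma exists_sample_with_small_deficit:
  fixes V :: "'v set" and C :: "'c set"
  assumes "finite V" "V \<noteq> {}" "finite C" "\<forall>v\<in>V. strict_linear_order_on C (P v)"
    and "\<forall>c\<in>C. 0 \<le> p c" "sum p C = 1" "1 \<le> k" "0 \<le> t" "t < \<theta>" "\<theta> \<le> 1"
  shows "\<exists>f\<in>{..<k} \<rightarrow>\<^sub>E C.
    (\<Sum>v\<in>V. deficit \<theta> t (top_sample_mass k C (P v) p f)) < real (card V) * deficit_integral \<theta> t k \<theta>"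
proof -
  have "expected_deficit k \<theta> t C (P v) p < deficit_integral \<theta> t k \<theta>" if "v \<in> V" for v
    using expected_deficit_bound[OF assms(3) _ assms(5,7,8), of "P v" "(t + \<theta>) / 2" \<theta>]
      deficit_integral_saturate[of t \<theta> 1 k] assms(4,6,9,10) that by simp
  then have "(\<Sum>v\<in>V. expected_deficit k \<theta> t C (P v) p) < (\<Sum>v\<in>V. deficit_integral \<theta> t k \<theta>)"
    using assms(1,2) by (intro sum_strict_mono) auto
  then have "(\<Sum>f\<in>{..<k} \<rightarrow>\<^sub>E C. (\<Prod>i<k. p (f i)) * (\<Sum>v\<in>V. deficit \<theta> t (top_sample_mass k C (P v) p f)))
      < real (card V) * deficit_integral \<theta> t k \<theta>"
    unfolding expected_deficit_def sum_distrib_left by (subst sum.swap) simp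
  moreover have "\<forall>f\<in>{..<k} \<rightarrow>\<^sub>E C. 0 \<le> (\<Prod>i<k. p (f i))"
    using assms(5) by (auto intro!: prod_nonneg simp: PiE_iff)
  ultimately show ?thesis
    using assms(3,6) by (intro exists_lt_of_weighted_sum_lt) (auto simp: sum_prod_PiE_eq_power finite_PiE)
qed

lemma top_sample_mass_le_mass_below:
  assumes "finite C" "strict_linear_order_on C R" "\<forall>c\<in>C. 0 \<le> p c" "1 \<le> k"
    and "a \<in> C" "f ` {..<k} \<subseteq> C" "\<forall>i<k. R a (f i)"
  shows "top_sample_mass k C R p f \<le> mass_below C R p a"
proof -
  have "mass_weakly_below C R p (f i) \<le> mass_below C R p a" if "i < k" for i
  proof -
    have "{c\<in>C. c = f i \<or> R (f i) c} \<subseteq> {c\<in>C. R a c}"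
      using that assms(5-7) strict_linear_order_on_trans[OF assms(2), of a "f i"] by auto
    then show ?thesis
      unfolding mass_weakly_below_def mass_below_def using assms(1,3) by (intro sum_mono2) auto
  qed
  then show ?thesis
    using assms(4) unfolding top_sample_mass_def by (subst Max_le_iff) (auto simp: lessThan_empty_iff)
qed

lemma card_preferring_voters_le:
  fixes V :: "'v set" and C :: "'c set"
  assumes "finite V" "finite C" "\<forall>v\<in>V. strict_linear_order_on C (P v)" "\<forall>c\<in>C. 0 \<le> p c"
    and "1 \<le> k" "t \<le> \<theta>" "a \<in> C" "f ` {..<k} \<subseteq> S" "S \<subseteq> C"
  shows "real (card {v\<in>V. prefers_to_committee P v a S}) * (\<theta> - t)
    \<le> (\<Sum>v\<in>V. max 0 (mass_below C (P v) p a - t)) + (\<Sum>v\<in>V. deficit \<theta> t (top_sample_mass k C (P v) p f))"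
proof -
  define D where "D = {v\<in>V. prefers_to_committee P v a S}"
  have "\<theta> - t \<le> max 0 (mass_below C (P v) p a - t) + deficit \<theta> t (top_sample_mass k C (P v) p f)"
    if "v \<in> D" for v
  proof -
    have "top_sample_mass k C (P v) p f \<le> mass_below C (P v) p a"
      using that assms by (intro top_sample_mass_le_mass_below)
        (auto simp: D_def prefers_to_committee_def)
    then show ?thesis
      using deficit_ge[of \<theta> t "top_sample_mass k C (P v) p f"] by linarith
  qed
  then have "(\<Sum>v\<in>D. \<theta> - t)
      \<le> (\<Sum>v\<in>D. max 0 (mass_below C (P v) p a - t) + deficit \<theta> t (top_sample_mass k C (P v) p f))"
    by (rule sum_mono)
  then have "real (card D) * (\<theta> - t)
      \<le> (\<Sum>v\<in>D. max 0 (mass_below C (P v) p a - t)) + (\<Sum>v\<in>D. deficit \<theta> t (top_sample_mass k C (P v) p f))"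
    by (simp add: sum.distrib mult.commute)
  also have "\<dots> \<le> (\<Sum>v\<in>V. max 0 (mass_below C (P v) p a - t)) + (\<Sum>v\<in>V. deficit \<theta> t (top_sample_mass k C (P v) p f))"
    using assms(1,6) by (intro add_mono sum_mono2) (auto simp: D_def deficit_nonneg)
  finally show ?thesis
    by (simp add: D_def)
qed

lemma exists_committee_undominated_one:
  assumes "election V C P" "1 \<le> k" "k \<le> card C"
  shows "\<exists>S. S \<subseteq> C \<and> card S = k \<and> undominated V C P 1 S"
proof -
  have fin: "finite V" "V \<noteq> {}" "finite C" and order: "\<forall>v\<in>V. strict_linear_order_on C (P v)"
    using assms(1) by (auto simp: election_def)
  obtain v0 where v0: "v0 \<in> V"
    using fin(2) by blast
  then have order_v0: "strict_linear_order_on C (P v0)"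
    using order by blast
  obtain x where x: "x \<in> C" "\<forall>c\<in>C - {x}. P v0 x c"
    using strict_linear_order_on_has_top[OF fin(3) _ order_v0] assms(2,3) by fastforce
  obtain S where S: "x \<in> S" "S \<subseteq> C" "card S = k"
    using exists_subset_between[of "{x}" k C] x(1) fin(3) assms(2,3) by auto
  have "dom_fraction V P a S < 1" if "a \<in> C" for a
  proof -
    have "\<not> P v0 a x"
    proof (cases "a = x")
      case True
      then show ?thesis
        using order_v0 x(1) unfolding strict_linear_order_on_def by blast
    next
      case False
      then show ?thesis
        using x that strict_linear_order_on_asym[OF order_v0, of x a] by blast
    qed
    then have "\<not> prefers_to_committee P v0 a S"
      using S(1) by (auto simp: prefers_to_committee_def)
    then have "card {v\<in>V. prefers_to_committee P v a S} < card V"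
      using fin(1) v0 by (intro psubset_card_mono) auto
    then show ?thesis
      by (simp add: dom_fraction_def)
  qed
  then show ?thesis
    using S by (auto simp: undominated_def)
qed

lemma deficit_integral_key_bound:
  fixes t \<theta> :: real
  assumes "t \<le> \<theta>" "\<theta> ^ k = t ^ k - t + 1"
    and "(1 - t\<^sup>2) / 2 \<le> real k / real (k + 1) * (\<theta> ^ (k + 1) - t ^ (k + 1))"
  shows "(1 - t)\<^sup>2 / 2 + deficit_integral \<theta> t k \<theta> \<le> (t ^ k - t + 1) * (\<theta> - t)"
proof -
  define r where "r = real k / real (k + 1)"
  have "deficit_integral \<theta> t k \<theta>
      = (\<theta> - t) * t ^ k + (\<theta> * (t ^ k - t + 1) - r * \<theta> ^ (k + 1)) - (\<theta> * t ^ k - r * t ^ (k + 1))"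
    using assms(1,2) by (simp add: deficit_integral_def ramp_integral_def r_def)
  then have "(t ^ k - t + 1) * (\<theta> - t) - deficit_integral \<theta> t k \<theta> = r * (\<theta> ^ (k + 1) - t ^ (k + 1)) - t + t\<^sup>2"
    by (simp add: algebra_simps power2_eq_square)
  moreover have "(1 - t)\<^sup>2 / 2 = (1 - t\<^sup>2) / 2 - t + t\<^sup>2"
    by (simp add: power2_eq_square field_simps)
  moreover have "(1 - t\<^sup>2) / 2 \<le> r * (\<theta> ^ (k + 1) - t ^ (k + 1))"
    using assms(3) by (simp add: r_def)
  ultimately show ?thesis
    by linarith
qed

lemma root_of_threshold:
  fixes t :: real
  assumes "1 \<le> k" "0 \<le> t" "t < 1"
  defines "\<alpha> \<equiv> t ^ k - t + 1"
  shows "root k \<alpha> ^ k = \<alpha>" "t < root k \<alpha>" "root k \<alpha> \<le> 1"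
    and "\<alpha> powr (real (k + 1) / real k) = root k \<alpha> ^ (k + 1)"
proof -
  have "t ^ k \<le> t"
    using power_decreasing[of 1 k t] assms(1-3) by simp
  then have \<alpha>: "t ^ k < \<alpha>" "\<alpha> \<le> 1"
    using assms(3) by (auto simp: \<alpha>_def)
  then have "0 < \<alpha>"
    using assms(2) by (meson le_less_trans zero_le_power)
  show root_pow: "root k \<alpha> ^ k = \<alpha>"
    using \<open>0 < \<alpha>\<close> assms(1) by simp
  have "0 \<le> root k \<alpha>"
    using \<open>0 < \<alpha>\<close> by (simp add: real_root_ge_zero)
  then show "t < root k \<alpha>"
    using \<alpha>(1) by (intro power_less_imp_less_base[of t k]) (auto simp: root_pow)
  show "root k \<alpha> \<le> 1"
    using \<alpha>(2) assms(1) by simp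
  have root_pos: "0 < root k \<alpha>"
    using \<open>0 < \<alpha>\<close> assms(1) by (simp add: real_root_gt_zero)
  have "root k \<alpha> ^ (k + 1) = root k \<alpha> powr real (k + 1)"
    using root_pos by (rule powr_realpow[symmetric])
  also have "\<dots> = (root k \<alpha> powr real k) powr (real (k + 1) / real k)"
    using assms(1) by (subst powr_powr) simp
  also have "root k \<alpha> powr real k = \<alpha>"
    using root_pos by (simp add: powr_realpow root_pow)
  finally show "\<alpha> powr (real (k + 1) / real k) = root k \<alpha> ^ (k + 1)"
    by simp
qed

lemma undominated_of_sample:
  fixes V :: "'v set" and C :: "'c set"
  assumes "finite V" "V \<noteq> {}" "finite C" "\<forall>v\<in>V. strict_linear_order_on C (P v)" "\<forall>c\<in>C. 0 \<le> p c"
    and excess: "\<forall>a\<in>C. (\<Sum>v\<in>V. max 0 (mass_below C (P v) p a - t)) \<le> real (card V) * (1 - t)\<^sup>2 / 2"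
    and "1 \<le> k" "t < \<theta>" "f ` {..<k} \<subseteq> S" "S \<subseteq> C"
    and sample: "(\<Sum>v\<in>V. deficit \<theta> t (top_sample_mass k C (P v) p f)) < real (card V) * deficit_integral \<theta> t k \<theta>"
    and key: "(1 - t)\<^sup>2 / 2 + deficit_integral \<theta> t k \<theta> \<le> \<alpha> * (\<theta> - t)"
  shows "undominated V C P \<alpha> S"
  unfolding undominated_def
proof
  fix a assume "a \<in> C"
  have "real (card {v\<in>V. prefers_to_committee P v a S}) * (\<theta> - t)
      < real (card V) * (1 - t)\<^sup>2 / 2 + real (card V) * deficit_integral \<theta> t k \<theta>"
    using card_preferring_voters_le[OF assms(1,3,4,5,7) less_imp_le[OF assms(8)] \<open>a \<in> C\<close> assms(9,10)]
      excess[rule_format, OF \<open>a \<in> C\<close>] sample by linarith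
  also have "\<dots> \<le> real (card V) * \<alpha> * (\<theta> - t)"
    using mult_left_mono[OF key, of "real (card V)"] by (simp add: algebra_simps)
  finally have "real (card {v\<in>V. prefers_to_committee P v a S}) < real (card V) * \<alpha>"
    using assms(8) by simp
  then show "dom_fraction V P a S < \<alpha>"
    using assms(1,2) by (simp add: dom_fraction_def divide_less_eq mult.commute)
qed

theorem theorem5:
  fixes k :: nat and t :: real
    and V :: "'v set" and C :: "'c set" and P :: "'v \<Rightarrow> 'c \<Rightarrow> 'c \<Rightarrow> bool"
  assumes "k \<ge> 1"
    and "0 \<le> t" and "t \<le> 1"
    and "real k / real (k + 1) * ((t ^ k - t + 1) powr (real (k + 1) / real k) - t ^ (k + 1))
           \<ge> (1 - t ^ 2) / 2"
    and "election V C P"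
    and "k \<le> card C"
  shows "\<exists>S. S \<subseteq> C \<and> card S = k \<and> undominated V C P (t ^ k - t + 1) S"
proof (cases "t = 1")
  case True
  then show ?thesis
    using exists_committee_undominated_one[OF assms(5,1,6)] by simp
next
  case False
  have fin: "finite V" "V \<noteq> {}" "finite C" and order: "\<forall>v\<in>V. strict_linear_order_on C (P v)"
    using assms(5) by (auto simp: election_def)
  define \<theta> where "\<theta> = root k (t ^ k - t + 1)"
  have \<theta>: "\<theta> ^ k = t ^ k - t + 1" "t < \<theta>" "\<theta> \<le> 1"
    and key: "(1 - t)\<^sup>2 / 2 + deficit_integral \<theta> t k \<theta> \<le> (t ^ k - t + 1) * (\<theta> - t)"
    using root_of_threshold[OF assms(1,2)] deficit_integral_key_bound[of t \<theta> k] assms(3,4) False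
    by (simp_all add: \<theta>_def)
  have "C \<noteq> {}"
    using assms(1,6) by auto
  then obtain p where p: "\<forall>c\<in>C. 0 \<le> p c" "sum p C = 1"
    and excess: "\<forall>a\<in>C. (\<Sum>v\<in>V. max 0 (mass_below C (P v) p a - t)) \<le> real (card V) * (1 - t)\<^sup>2 / 2"
    using exists_distribution_with_small_excess[OF fin(1,3) _ order assms(3)] by blast
  obtain f where f: "f \<in> {..<k} \<rightarrow>\<^sub>E C"
    and sample: "(\<Sum>v\<in>V. deficit \<theta> t (top_sample_mass k C (P v) p f)) < real (card V) * deficit_integral \<theta> t k \<theta>"
    using exists_sample_with_small_deficit[OF fin order p assms(1,2) \<theta>(2,3)] by blast
  obtain S where "f ` {..<k} \<subseteq> S" "S \<subseteq> C" "card S = k"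
    using exists_subset_between[of "f ` {..<k}" k C] f fin(3) assms(6) card_image_le[of "{..<k}" f]
    by (auto simp: PiE_iff)
  then show ?thesis
    using undominated_of_sample[OF fin order p(1) excess assms(1) \<theta>(2) _ _ sample key] by blast
qed

end
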